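(* For every restriction category $\mathbb{X}$, the restriction category $\mathbf{R}[\mathbf{L}[\mathbb{X}]]$ is isomorphic, as a restriction category, to $\mathbb{X}$, and this isomorphism is natural in $\mathbb{X}$.
   Context: Composition is diagrammatic. A restriction category is a category with an assignment to each $f:A\to B$ of $\bar f:A\to A$ such that $\bar ff=f$; $\bar f\bar g=\bar g\bar f$ and $\bar g\bar f=\overline{\bar gf}$ for $f:A\to B$, $g:A\to C$; $f\bar g=\overline{fg}f$ for $f:A\to B$, $g:B\to C$. A restriction idempotent is $a$ with $a=\bar a$. An isomorphism of restriction categories is an isomorphism of categories preserving the restriction operation; naturality is with respect to restriction functors (functors with $F\bar f=\overline{Ff}$). $\mathbf{L}[\mathbb{X}]$: objects pairs $(A,a)$, $a$ a restriction idempotent on $A$; morphisms $f:(A,a)\to(B,b)$ are morphisms $f:A\to B$ of $\mathbb{X}$ with $\bar f=a$ and $fb=f$; identity $a$; composition as in $\mathbb{X}$; local structure $\mathsf{L}(A,a)=(A,\mathrm{id}_A)$ and $\eta_{(A,a)}=a$. For a restriction functor $F$, $\mathbf{L}[F](A,a)=(FA,Fa)$ and $\mathbf{L}[F]f=Ff$. For a local category $\mathbb{C}$ (a category with objects $\mathsf{L}M$ and monics $\eta_M:M\to\mathsf{L}M$ satisfying $\mathsf{L}\mathsf{L}M=\mathsf{L}M$, $\eta_{\mathsf{L}M}=\mathrm{id}$, and existence of pullbacks of $\eta_M$ along any $f:N\to\mathsf{L}M$ with leg $m:P\to N$, $\mathsf{L}P=\mathsf{L}N$, $m\eta_N=\eta_P$),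 $\mathbf{R}[\mathbb{C}]$ has objects the total objects ($M=\mathsf{L}M$, $\eta_M=\mathrm{id}$); morphisms $M\to N$ are isomorphism classes of pairs $(U,f)$ with $\mathsf{L}U=M$, $f:U\to N$ ($(U,f)\cong(V,g)$ via an iso $\varphi:U\to V$ with $\varphi\eta_V=\eta_U$, $\varphi g=f$); identity $(M,\mathrm{id}_M)$; $(U,f)(V,g)=(W,\pi_Vg)$ with $W,\pi_V$ a pullback of $\eta_V$ along $f$; restriction $\overline{(U,f)}=(U,\eta_U)$. For a local functor $F$, $\mathbf{R}[F](U,f)=(FU,Ff)$. *)

theory Defs
  imports Main
begin

section \<open>Categories (composition is diagrammatic: cComp C f g = "f then g")\<close>

record ('o,'a) cat =
  cObj  :: "'o set"
  cArr  :: "'a set"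
  cDom  :: "'a \<Rightarrow> 'o"
  cCod  :: "'a \<Rightarrow> 'o"
  cId   :: "'o \<Rightarrow> 'a"
  cComp :: "'a \<Rightarrow> 'a \<Rightarrow> 'a"

record ('o,'a) rcat = "('o,'a) cat" +
  cRst :: "'a \<Rightarrow> 'a"

record ('o,'a) lcat = "('o,'a) cat" +
  cL   :: "'o \<Rightarrow> 'o"
  cEta :: "'o \<Rightarrow> 'a"

definition hom :: "('o,'a,'m) cat_scheme \<Rightarrow> 'o \<Rightarrow> 'o \<Rightarrow> 'a set" where
  "hom C A B = {f \<in> cArr C. cDom C f = A \<and> cCod C f = B}"

definition is_cat :: "('o,'a,'m) cat_scheme \<Rightarrow> bool" where
  "is_cat C \<longleftrightarrow>
     (\<forall>f\<in>cArr C. cDom C f \<in> cObj C \<and> cCod C f \<in> cObj C) \<and>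
     (\<forall>A\<in>cObj C. cId C A \<in> hom C A A) \<and>
     (\<forall>f\<in>cArr C. \<forall>g\<in>cArr C. cCod C f = cDom C g \<longrightarrow>
         cComp C f g \<in> hom C (cDom C f) (cCod C g)) \<and>
     (\<forall>f\<in>cArr C. cComp C (cId C (cDom C f)) f = f \<and> cComp C f (cId C (cCod C f)) = f) \<and>
     (\<forall>f\<in>cArr C. \<forall>g\<in>cArr C. \<forall>h\<in>cArr C. cCod C f = cDom C g \<longrightarrow> cCod C g = cDom C h \<longrightarrow>
         cComp C (cComp C f g) h = cComp C f (cComp C g h))"

definition restriction_category :: "('o,'a,'m) rcat_scheme \<Rightarrow> bool" where
  "restriction_category X \<longleftrightarrow> is_cat X \<and>
     (\<forall>f\<in>cArr X. cRst X f \<in> hom X (cDom X f) (cDom X f)) \<and>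
     (\<forall>f\<in>cArr X. cComp X (cRst X f) f = f) \<and>
     (\<forall>f\<in>cArr X. \<forall>g\<in>cArr X. cDom X f = cDom X g \<longrightarrow>
         cComp X (cRst X f) (cRst X g) = cComp X (cRst X g) (cRst X f) \<and>
         cComp X (cRst X g) (cRst X f) = cRst X (cComp X (cRst X g) f)) \<and>
     (\<forall>f\<in>cArr X. \<forall>g\<in>cArr X. cCod X f = cDom X g \<longrightarrow>
         cComp X f (cRst X g) = cComp X (cRst X (cComp X f g)) f)"

definition restriction_idempotent :: "('o,'a,'m) rcat_scheme \<Rightarrow> 'o \<Rightarrow> 'a \<Rightarrow> bool" where
  "restriction_idempotent X A a \<longleftrightarrow> a \<in> hom X A A \<and> cRst X a = a"

definition is_functor ::
  "('o,'a,'m) cat_scheme \<Rightarrow> ('p,'b,'n) cat_scheme \<Rightarrow> ('o \<Rightarrow> 'p) \<Rightarrow> ('a \<Rightarrow> 'b) \<Rightarrow> bool" where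
  "is_functor C D Fo Fa \<longleftrightarrow>
     (\<forall>A\<in>cObj C. Fo A \<in> cObj D) \<and>
     (\<forall>f\<in>cArr C. Fa f \<in> hom D (Fo (cDom C f)) (Fo (cCod C f))) \<and>
     (\<forall>A\<in>cObj C. Fa (cId C A) = cId D (Fo A)) \<and>
     (\<forall>f\<in>cArr C. \<forall>g\<in>cArr C. cCod C f = cDom C g \<longrightarrow>
         Fa (cComp C f g) = cComp D (Fa f) (Fa g))"

definition rfunctor ::
  "('o,'a,'m) rcat_scheme \<Rightarrow> ('p,'b,'n) rcat_scheme \<Rightarrow> ('o \<Rightarrow> 'p) \<Rightarrow> ('a \<Rightarrow> 'b) \<Rightarrow> bool" where
  "rfunctor X Y Fo Fa \<longleftrightarrow> is_functor X Y Fo Fa \<and>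
     (\<forall>f\<in>cArr X. Fa (cRst X f) = cRst Y (Fa f))"

definition iso_rcat ::
  "('o,'a,'m) rcat_scheme \<Rightarrow> ('p,'b,'n) rcat_scheme \<Rightarrow> ('o \<Rightarrow> 'p) \<Rightarrow> ('a \<Rightarrow> 'b) \<Rightarrow> bool" where
  "iso_rcat X Y Fo Fa \<longleftrightarrow> rfunctor X Y Fo Fa \<and>
     (\<exists>Go Ga. is_functor Y X Go Ga \<and>
        (\<forall>A\<in>cObj X. Go (Fo A) = A) \<and> (\<forall>B\<in>cObj Y. Fo (Go B) = B) \<and>
        (\<forall>f\<in>cArr X. Ga (Fa f) = f) \<and> (\<forall>g\<in>cArr Y. Fa (Ga g) = g))"

definition monic :: "('o,'a,'m) cat_scheme \<Rightarrow> 'a \<Rightarrow> bool" where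
  "monic C m \<longleftrightarrow> m \<in> cArr C \<and>
     (\<forall>x\<in>cArr C. \<forall>y\<in>cArr C. cDom C x = cDom C y \<longrightarrow> cCod C x = cDom C m \<longrightarrow>
        cCod C y = cDom C m \<longrightarrow> cComp C x m = cComp C y m \<longrightarrow> x = y)"

definition is_iso :: "('o,'a,'m) cat_scheme \<Rightarrow> 'a \<Rightarrow> bool" where
  "is_iso C \<phi> \<longleftrightarrow> \<phi> \<in> cArr C \<and>
     (\<exists>\<psi>\<in>hom C (cCod C \<phi>) (cDom C \<phi>).
        cComp C \<phi> \<psi> = cId C (cDom C \<phi>) \<and> cComp C \<psi> \<phi> = cId C (cCod C \<phi>))"

definition is_pullback :: "('o,'a,'m) cat_scheme \<Rightarrow> 'a \<Rightarrow> 'a \<Rightarrow> 'a \<Rightarrow> 'a \<Rightarrow> bool" where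
  "is_pullback C m g f h \<longleftrightarrow>
     m \<in> cArr C \<and> g \<in> cArr C \<and> f \<in> cArr C \<and> h \<in> cArr C \<and>
     cDom C m = cDom C g \<and> cCod C m = cDom C f \<and> cCod C g = cDom C h \<and> cCod C f = cCod C h \<and>
     cComp C m f = cComp C g h \<and>
     (\<forall>x\<in>cArr C. \<forall>y\<in>cArr C. cDom C x = cDom C y \<longrightarrow> cCod C x = cDom C f \<longrightarrow>
        cCod C y = cDom C h \<longrightarrow> cComp C x f = cComp C y h \<longrightarrow>
        (\<exists>!u. u \<in> hom C (cDom C x) (cDom C m) \<and> cComp C u m = x \<and> cComp C u g = y))"

definition local_category :: "('o,'a,'m) lcat_scheme \<Rightarrow> bool" where
  "local_category C \<longleftrightarrow> is_cat C \<and>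
     (\<forall>M\<in>cObj C. cL C M \<in> cObj C \<and> cEta C M \<in> hom C M (cL C M) \<and> monic C (cEta C M) \<and>
        cL C (cL C M) = cL C M \<and> cEta C (cL C M) = cId C (cL C M)) \<and>
     (\<forall>M\<in>cObj C. \<forall>N\<in>cObj C. \<forall>f\<in>hom C N (cL C M).
        \<exists>m g. is_pullback C m g f (cEta C M) \<and> cL C (cDom C m) = cL C N \<and>
              cComp C m (cEta C N) = cEta C (cDom C m))"

definition total_obj :: "('o,'a,'m) lcat_scheme \<Rightarrow> 'o \<Rightarrow> bool" where
  "total_obj C M \<longleftrightarrow> M \<in> cObj C \<and> cL C M = M \<and> cEta C M = cId C M"

definition span_iso :: "('o,'a,'m) lcat_scheme \<Rightarrow> 'o \<times> 'a \<Rightarrow> 'o \<times> 'a \<Rightarrow> bool" where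
  "span_iso C q p \<longleftrightarrow>
     (\<exists>\<phi>. is_iso C \<phi> \<and> cDom C \<phi> = fst q \<and> cCod C \<phi> = fst p \<and>
          cComp C \<phi> (cEta C (fst p)) = cEta C (fst q) \<and> cComp C \<phi> (snd p) = snd q)"

definition rclass :: "('o,'a,'m) lcat_scheme \<Rightarrow> 'o \<times> 'a \<Rightarrow> ('o \<times> 'a) set" where
  "rclass C p = {q. fst q \<in> cObj C \<and> snd q \<in> hom C (fst q) (cCod C (snd p)) \<and> span_iso C q p}"

definition rrep :: "('o \<times> 'a) set \<Rightarrow> 'o \<times> 'a" where
  "rrep c = (SOME p. p \<in> c)"

text \<open>Composite (U,f)(V,g) = (W, \<pi>_V g), with W, \<pi>_V a pullback of \<eta>_V along f
  as provided by the local structure.\<close>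
definition rcomp :: "('o,'a,'m) lcat_scheme \<Rightarrow> ('o \<times> 'a) set \<Rightarrow> ('o \<times> 'a) set \<Rightarrow> ('o \<times> 'a) set" where
  "rcomp C c d =
     (let U = fst (rrep c); f = snd (rrep c); V = fst (rrep d); g = snd (rrep d);
          mp = (SOME mp. is_pullback C (fst mp) (snd mp) f (cEta C V) \<and>
                   cL C (cDom C (fst mp)) = cL C U \<and>
                   cComp C (fst mp) (cEta C U) = cEta C (cDom C (fst mp)))
      in rclass C (cDom C (fst mp), cComp C (snd mp) g))"

definition R :: "('o,'a,'m) lcat_scheme \<Rightarrow> ('o, ('o \<times> 'a) set) rcat" where
  "R C = \<lparr> cObj = {M. total_obj C M},
           cArr = {rclass C (U, f) | U f. U \<in> cObj C \<and> f \<in> cArr C \<and> cDom C f = U \<and>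
                                          total_obj C (cCod C f)},
           cDom = (\<lambda>c. cL C (fst (rrep c))),
           cCod = (\<lambda>c. cCod C (snd (rrep c))),
           cId = (\<lambda>M. rclass C (M, cId C M)),
           cComp = rcomp C,
           cRst = (\<lambda>c. rclass C (fst (rrep c), cEta C (fst (rrep c)))) \<rparr>"

definition R_arr :: "('p,'b,'n) lcat_scheme \<Rightarrow> ('o \<Rightarrow> 'p) \<Rightarrow> ('a \<Rightarrow> 'b) \<Rightarrow> ('o \<times> 'a) set \<Rightarrow> ('p \<times> 'b) set" where
  "R_arr D Fo Fa c = rclass D (Fo (fst (rrep c)), Fa (snd (rrep c)))"

text \<open>Objects are pairs (A,a) with a a restriction idempotent on A; a morphism
  f : (A,a) \<rightarrow> (B,b) is recorded as the triple ((A,a), f, (B,b)).\<close>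
definition L_objs :: "('o,'a,'m) rcat_scheme \<Rightarrow> ('o \<times> 'a) set" where
  "L_objs X = {(A, a). A \<in> cObj X \<and> restriction_idempotent X A a}"

definition L :: "('o,'a,'m) rcat_scheme \<Rightarrow> ('o \<times> 'a, ('o \<times> 'a) \<times> 'a \<times> ('o \<times> 'a)) lcat" where
  "L X = \<lparr> cObj = L_objs X,
           cArr = {(s, f, t). s \<in> L_objs X \<and> t \<in> L_objs X \<and> f \<in> hom X (fst s) (fst t) \<and>
                              cRst X f = snd s \<and> cComp X f (snd t) = f},
           cDom = (\<lambda>(s, f, t). s),
           cCod = (\<lambda>(s, f, t). t),
           cId = (\<lambda>(A, a). ((A, a), a, (A, a))),
           cComp = (\<lambda>(s, f, t) (s', g, t'). (s, cComp X f g, t')),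
           cL = (\<lambda>(A, a). (A, cId X A)),
           cEta = (\<lambda>(A, a). ((A, a), a, (A, cId X A))) \<rparr>"

definition L_obj :: "('o \<Rightarrow> 'p) \<Rightarrow> ('a \<Rightarrow> 'b) \<Rightarrow> 'o \<times> 'a \<Rightarrow> 'p \<times> 'b" where
  "L_obj Fo Fa = (\<lambda>(A, a). (Fo A, Fa a))"

definition L_arr :: "('o \<Rightarrow> 'p) \<Rightarrow> ('a \<Rightarrow> 'b) \<Rightarrow>
    ('o \<times> 'a) \<times> 'a \<times> ('o \<times> 'a) \<Rightarrow> ('p \<times> 'b) \<times> 'b \<times> ('p \<times> 'b)" where
  "L_arr Fo Fa = (\<lambda>(s, f, t). (L_obj Fo Fa s, Fa f, L_obj Fo Fa t))"

text \<open>On objects (A, id_A) \<mapsto> A; on arrows [(U, f)] \<mapsto> f.\<close>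
definition phi_obj :: "'o \<times> 'a \<Rightarrow> 'o" where
  "phi_obj M = fst M"

definition phi_arr :: "(('o \<times> 'a) \<times> ('o \<times> 'a) \<times> 'a \<times> ('o \<times> 'a)) set \<Rightarrow> 'a" where
  "phi_arr c = fst (snd (snd (rrep c)))"

end

(* In L[X] the restriction idempotent of an object is part of the object, so an isomorphism of
   spans compatible with the units eta is an identity: every arrow of R[L[X]] is a singleton
   class {((src f, rst f), f)} for a unique arrow f of X.  A pullback of eta_(B,b) along
   f : (A, rst f) -> (B, 1) is forced to consist of the restriction idempotent rst (f b) on A and
   of f b, so whatever pullback the composition of R chooses, the composite of the classes of f and
   g is the class of f (rst g) g = f g.  Hence f |-> {((src f, rst f), f)} is a bijection onto
   R[L[X]] preserving all the structure, with inverse phi; naturality holds because L[F] and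
   R[L[F]] act componentwise. *)

theory Submission
  imports Defs
begin

section \<open>Restriction categories\<close>

locale restriction_cat =
  fixes X :: "('o,'a,'m) rcat_scheme"
  assumes restriction_category: "restriction_category X"
begin

abbreviation seq :: "'a \<Rightarrow> 'a \<Rightarrow> 'a" (infixl "\<cdot>" 75) where "f \<cdot> g \<equiv> cComp X f g"
abbreviation "rst \<equiv> cRst X"
abbreviation "idt \<equiv> cId X"
abbreviation "src \<equiv> cDom X"
abbreviation "tgt \<equiv> cCod X"
abbreviation "Ob \<equiv> cObj X"
abbreviation "Ar \<equiv> cArr X"

lemma is_cat: "is_cat X"
  using restriction_category unfolding restriction_category_def by blast

lemma ob_src [simp]: "f \<in> Ar \<Longrightarrow> src f \<in> Ob"
  and ob_tgt [simp]: "f \<in> Ar \<Longrightarrow> tgt f \<in> Ob"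
  using is_cat unfolding is_cat_def by blast+

lemma arr_idt [simp]: "A \<in> Ob \<Longrightarrow> idt A \<in> Ar"
  and src_idt [simp]: "A \<in> Ob \<Longrightarrow> src (idt A) = A"
  and tgt_idt [simp]: "A \<in> Ob \<Longrightarrow> tgt (idt A) = A"
  using is_cat unfolding is_cat_def hom_def by blast+

lemma arr_seq [simp]: "f \<in> Ar \<Longrightarrow> g \<in> Ar \<Longrightarrow> tgt f = src g \<Longrightarrow> f \<cdot> g \<in> Ar"
  and src_seq [simp]: "f \<in> Ar \<Longrightarrow> g \<in> Ar \<Longrightarrow> tgt f = src g \<Longrightarrow> src (f \<cdot> g) = src f"
  and tgt_seq [simp]: "f \<in> Ar \<Longrightarrow> g \<in> Ar \<Longrightarrow> tgt f = src g \<Longrightarrow> tgt (f \<cdot> g) = tgt g"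
  using is_cat unfolding is_cat_def hom_def by blast+

lemma idt_seq [simp]: "f \<in> Ar \<Longrightarrow> src f = A \<Longrightarrow> idt A \<cdot> f = f"
  and seq_idt [simp]: "f \<in> Ar \<Longrightarrow> tgt f = B \<Longrightarrow> f \<cdot> idt B = f"
  using is_cat unfolding is_cat_def by blast+

lemma seq_assoc:
  "f \<in> Ar \<Longrightarrow> g \<in> Ar \<Longrightarrow> h \<in> Ar \<Longrightarrow> tgt f = src g \<Longrightarrow> tgt g = src h \<Longrightarrow>
    f \<cdot> g \<cdot> h = f \<cdot> (g \<cdot> h)"
  using is_cat unfolding is_cat_def by blast

lemma arr_rst [simp]: "f \<in> Ar \<Longrightarrow> rst f \<in> Ar"
  and src_rst [simp]: "f \<in> Ar \<Longrightarrow> src (rst f) = src f"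
  and tgt_rst [simp]: "f \<in> Ar \<Longrightarrow> tgt (rst f) = src f"
  using restriction_category unfolding restriction_category_def hom_def by blast+

lemma rst_seq [simp]: "f \<in> Ar \<Longrightarrow> rst f \<cdot> f = f"
  using restriction_category unfolding restriction_category_def by blast

lemma rst_commute: "f \<in> Ar \<Longrightarrow> g \<in> Ar \<Longrightarrow> src f = src g \<Longrightarrow> rst f \<cdot> rst g = rst g \<cdot> rst f"
  using restriction_category unfolding restriction_category_def by blast

lemma rst_seq_rst: "f \<in> Ar \<Longrightarrow> g \<in> Ar \<Longrightarrow> src f = src g \<Longrightarrow> rst g \<cdot> rst f = rst (rst g \<cdot> f)"
  using restriction_category unfolding restriction_category_def by blast

lemma seq_rst: "f \<in> Ar \<Longrightarrow> g \<in> Ar \<Longrightarrow> tgt f = src g \<Longrightarrow> f \<cdot> rst g = rst (f \<cdot> g) \<cdot> f"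
  using restriction_category unfolding restriction_category_def by blast

lemma rst_idt [simp]: "A \<in> Ob \<Longrightarrow> rst (idt A) = idt A"
  by (metis arr_idt arr_rst rst_seq seq_idt src_idt tgt_rst)

lemma rst_rst [simp]: "f \<in> Ar \<Longrightarrow> rst (rst f) = rst f"
  by (metis arr_idt ob_src rst_idt rst_seq_rst seq_idt src_idt tgt_rst arr_rst)

lemma rst_seq_rst_absorb:
  assumes "f \<in> Ar" "h \<in> Ar" "tgt f = src h"
  shows "rst (f \<cdot> h) \<cdot> rst f = rst (f \<cdot> h)"
proof -
  have "rst (f \<cdot> h) \<cdot> rst f = rst (rst f \<cdot> (f \<cdot> h))"
    using assms rst_commute [of "f \<cdot> h" f] rst_seq_rst [of "f \<cdot> h" f] by simp
  also have "rst f \<cdot> (f \<cdot> h) = f \<cdot> h"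
    using assms seq_assoc [of "rst f" f h] by simp
  finally show ?thesis .
qed

lemma rst_seq_rst_right:
  assumes "f \<in> Ar" "g \<in> Ar" "tgt f = src g"
  shows "rst (f \<cdot> rst g) = rst (f \<cdot> g)"
proof -
  have "rst (f \<cdot> rst g) = rst (rst (f \<cdot> g) \<cdot> f)"
    using assms seq_rst [of f g] by simp
  also have "\<dots> = rst (f \<cdot> g) \<cdot> rst f"
    using assms rst_seq_rst [of f "f \<cdot> g"] by simp
  finally show ?thesis
    using assms rst_seq_rst_absorb by simp
qed

lemma rst_seq_eq:
  assumes "f \<in> Ar" "g \<in> Ar" "tgt f = src g" "f \<cdot> rst g = f"
  shows "rst (f \<cdot> g) = rst f"
  using assms rst_seq_rst_right by metis

lemma restriction_idempotents_commute:
  "a \<in> Ar \<Longrightarrow> b \<in> Ar \<Longrightarrow> src a = src b \<Longrightarrow> rst a = a \<Longrightarrow> rst b = b \<Longrightarrow>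
    a \<cdot> b = b \<cdot> a"
  using rst_commute by metis

lemma restriction_idempotent_idem: "a \<in> Ar \<Longrightarrow> rst a = a \<Longrightarrow> a \<cdot> a = a"
  using rst_seq by metis

end

section \<open>Copies of a restriction category\<close>

locale rcat_copy = restriction_cat X for X :: "('o,'a,'m) rcat_scheme" +
  fixes Y :: "('p,'b,'n) rcat_scheme"
    and Go :: "'o \<Rightarrow> 'p" and Ga :: "'a \<Rightarrow> 'b"
    and Fo :: "'p \<Rightarrow> 'o" and Fa :: "'b \<Rightarrow> 'a"
  assumes obj_image: "cObj Y = Go ` Ob"
    and arr_image: "cArr Y = Ga ` Ar"
    and Fo_Go: "A \<in> Ob \<Longrightarrow> Fo (Go A) = A"
    and Fa_Ga: "f \<in> Ar \<Longrightarrow> Fa (Ga f) = f"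
    and dom_Ga: "f \<in> Ar \<Longrightarrow> cDom Y (Ga f) = Go (src f)"
    and cod_Ga: "f \<in> Ar \<Longrightarrow> cCod Y (Ga f) = Go (tgt f)"
    and id_Go: "A \<in> Ob \<Longrightarrow> cId Y (Go A) = Ga (idt A)"
    and comp_Ga: "f \<in> Ar \<Longrightarrow> g \<in> Ar \<Longrightarrow> tgt f = src g \<Longrightarrow>
      cComp Y (Ga f) (Ga g) = Ga (f \<cdot> g)"
    and rst_Ga: "f \<in> Ar \<Longrightarrow> cRst Y (Ga f) = Ga (rst f)"
begin

lemma Go_eq_iff: "A \<in> Ob \<Longrightarrow> B \<in> Ob \<Longrightarrow> Go A = Go B \<longleftrightarrow> A = B"
  using Fo_Go by metis

lemma restriction_category_copy: "restriction_category Y"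
  unfolding restriction_category_def is_cat_def hom_def arr_image obj_image ball_simps(9)
  by (intro conjI ballI impI)
    (simp_all add: dom_Ga cod_Ga id_Go comp_Ga rst_Ga Go_eq_iff seq_assoc,
      metis rst_commute, metis rst_seq_rst, metis seq_rst)

lemma iso_rcat_copy: "iso_rcat Y X Fo Fa"
proof -
  have "rfunctor Y X Fo Fa"
    unfolding rfunctor_def is_functor_def hom_def arr_image obj_image ball_simps(9)
    by (intro conjI ballI impI)
      (simp_all add: dom_Ga cod_Ga id_Go comp_Ga rst_Ga Go_eq_iff Fo_Go Fa_Ga)
  moreover have "is_functor X Y Go Ga"
    unfolding is_functor_def hom_def arr_image obj_image ball_simps(9)
    by (intro conjI ballI impI) (simp_all add: dom_Ga cod_Ga id_Go comp_Ga)
  ultimately show ?thesis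
    unfolding iso_rcat_def arr_image obj_image ball_simps(9)
    by (intro conjI exI [of _ Go] exI [of _ Ga]) (simp_all add: Fo_Go Fa_Ga)
qed

end

section \<open>The local category L[X]\<close>

lemma is_pullback_universal:
  assumes "is_pullback C m g f h" "x \<in> cArr C" "y \<in> cArr C" "cDom C x = cDom C y"
    "cCod C x = cDom C f" "cCod C y = cDom C h" "cComp C x f = cComp C y h"
  obtains u where "u \<in> hom C (cDom C x) (cDom C m)" "cComp C u m = x" "cComp C u g = y"
  using assms unfolding is_pullback_def by blast

definition L_arr_of :: "('o,'a,'m) rcat_scheme \<Rightarrow> 'a \<Rightarrow> ('o \<times> 'a) \<times> 'a \<times> ('o \<times> 'a)" where
  "L_arr_of X f = ((cDom X f, cRst X f), f, (cCod X f, cId X (cCod X f)))"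

context restriction_cat
begin

lemma L_simps [simp]:
  "cObj (L X) = L_objs X"
  "cDom (L X) (s, f, t) = s"
  "cCod (L X) (s, f, t) = t"
  "cId (L X) (A, a) = ((A, a), a, (A, a))"
  "cComp (L X) (s, f, t) (s', g, t') = (s, f \<cdot> g, t')"
  "cL (L X) (A, a) = (A, idt A)"
  "cEta (L X) (A, a) = ((A, a), a, (A, idt A))"
  by (simp_all add: L_def)

lemma L_objs_iff [simp]:
  "(A, a) \<in> L_objs X \<longleftrightarrow> A \<in> Ob \<and> a \<in> Ar \<and> src a = A \<and> tgt a = A \<and> rst a = a"
  by (auto simp: L_objs_def restriction_idempotent_def hom_def)

lemma L_arr_iff [simp]:
  "((A, a), f, (B, b)) \<in> cArr (L X) \<longleftrightarrow>
     (A, a) \<in> L_objs X \<and> (B, b) \<in> L_objs X \<and> f \<in> Ar \<and> src f = A \<and> tgt f = B \<and>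
     rst f = a \<and> f \<cdot> b = f"
  by (auto simp: L_def hom_def)

lemma L_arr_cases: obtains A a f B b where "x = ((A, a), f, (B, b))"
  by (metis prod.collapse)

lemma L_obj_cases: obtains A a where "x = (A, a)"
  by (metis prod.collapse)

lemma is_cat_L: "is_cat (L X)"
  unfolding is_cat_def hom_def
  by (intro conjI ballI impI)
    (auto simp: split_paired_all restriction_idempotent_idem rst_seq_eq seq_assoc)

lemma L_arr_of_arr [simp]: "f \<in> Ar \<Longrightarrow> L_arr_of X f \<in> cArr (L X)"
  by (simp add: L_arr_of_def)

lemma monic_L_eta: "M \<in> cObj (L X) \<Longrightarrow> monic (L X) (cEta (L X) M)"
  unfolding monic_def by (cases M rule: L_obj_cases) (auto simp: split_paired_all)

lemma is_pullback_L_eta: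
  assumes f: "f \<in> Ar" and a: "(tgt f, a) \<in> L_objs X"
  defines "q \<equiv> rst (f \<cdot> a)"
  shows "is_pullback (L X) ((src f, q), q, (src f, rst f)) ((src f, q), f \<cdot> a, (tgt f, a))
           (L_arr_of X f) (cEta (L X) (tgt f, a))"
    (is "is_pullback (L X) ?m ?g _ _")
  unfolding is_pullback_def
proof (intro conjI ballI impI)
  have fa: "f \<cdot> a \<in> Ar" "src (f \<cdot> a) = src f" "tgt (f \<cdot> a) = tgt f" "f \<cdot> a \<cdot> a = f \<cdot> a"
    using f a by (simp_all add: seq_assoc restriction_idempotent_idem)
  then show "?m \<in> cArr (L X)" "?g \<in> cArr (L X)"
    using f a rst_seq_rst_absorb [of f a] by (simp_all add: q_def)
  show "L_arr_of X f \<in> cArr (L X)" "cEta (L X) (tgt f, a) \<in> cArr (L X)"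
    using f a by simp_all
  show "cComp (L X) ?m (L_arr_of X f) = cComp (L X) ?g (cEta (L X) (tgt f, a))"
    using f a fa seq_rst [of f a] by (simp add: L_arr_of_def q_def)
next
  fix x y
  assume x: "x \<in> cArr (L X)" and y: "y \<in> cArr (L X)"
    and "cDom (L X) x = cDom (L X) y" "cCod (L X) x = cDom (L X) (L_arr_of X f)"
    "cCod (L X) y = cDom (L X) (cEta (L X) (tgt f, a))"
    and square: "cComp (L X) x (L_arr_of X f) = cComp (L X) y (cEta (L X) (tgt f, a))"
  then obtain C c x' y' where xy: "x = ((C, c), x', (src f, rst f))" "y = ((C, c), y', (tgt f, a))"
    by (cases x rule: L_arr_cases, cases y rule: L_arr_cases) (auto simp: L_arr_of_def)
  have x': "x' \<in> Ar" "src x' = C" "tgt x' = src f" "rst x' = c"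
    and y': "y' \<in> Ar" "rst y' = c" "y' \<cdot> a = y'"
    using x y xy by simp_all
  have "x' \<cdot> f = y'"
    using square xy y' by (simp add: L_arr_of_def)
  then have x'fa: "x' \<cdot> (f \<cdot> a) = y'"
    using f a x' y' seq_assoc [of x' f a] by simp
  have x'q: "x' \<cdot> q = x'"
    using f a x' y' x'fa seq_rst [of x' "f \<cdot> a"] rst_seq [of x'] by (simp add: q_def)
  show "\<exists>!u. u \<in> hom (L X) (cDom (L X) x) (cDom (L X) ?m) \<and>
      cComp (L X) u ?m = x \<and> cComp (L X) u ?g = y"
  proof (rule ex1I)
    show "((C, c), x', (src f, q)) \<in> hom (L X) (cDom (L X) x) (cDom (L X) ?m) \<and>
        cComp (L X) ((C, c), x', (src f, q)) ?m = x \<and> cComp (L X) ((C, c), x', (src f, q)) ?g = y"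
      using x xy x' x'q x'fa f a by (simp add: hom_def q_def)
  next
    fix u
    assume "u \<in> hom (L X) (cDom (L X) x) (cDom (L X) ?m) \<and>
      cComp (L X) u ?m = x \<and> cComp (L X) u ?g = y"
    then show "u = ((C, c), x', (src f, q))"
      using xy by (cases u rule: L_arr_cases) (auto simp: hom_def)
  qed
qed (simp_all add: L_arr_of_def)

lemma L_arr_to_total_obj:
  assumes "h \<in> cArr (L X)" "cCod (L X) h = (B, idt B)"
  obtains f where "f \<in> Ar" "tgt f = B" "h = L_arr_of X f"
  using assms by (cases h rule: L_arr_cases) (auto simp: L_arr_of_def)

lemma L_pullback_leg_eta:
  assumes "f \<in> Ar" "(tgt f, a) \<in> L_objs X"
  shows "cComp (L X) ((src f, rst (f \<cdot> a)), rst (f \<cdot> a), (src f, rst f)) (cEta (L X) (src f, rst f)) =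
      cEta (L X) (src f, rst (f \<cdot> a))"
  using assms rst_seq_rst_absorb [of f a] by simp

lemma local_category_L: "local_category (L X)"
proof -
  have eta: "cL (L X) M \<in> cObj (L X) \<and> cEta (L X) M \<in> hom (L X) M (cL (L X) M) \<and>
      monic (L X) (cEta (L X) M) \<and> cL (L X) (cL (L X) M) = cL (L X) M \<and>
      cEta (L X) (cL (L X) M) = cId (L X) (cL (L X) M)" if M: "M \<in> cObj (L X)" for M
    using M monic_L_eta [OF M] by (cases M rule: L_obj_cases) (auto simp: hom_def)
  have pullback: "\<exists>m g. is_pullback (L X) m g h (cEta (L X) M) \<and>
      cL (L X) (cDom (L X) m) = cL (L X) N \<and>
      cComp (L X) m (cEta (L X) N) = cEta (L X) (cDom (L X) m)"
    if M: "M \<in> cObj (L X)" and h: "h \<in> hom (L X) N (cL (L X) M)" for M N h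
  proof -
    obtain A a where Aa: "M = (A, a)"
      by (rule L_obj_cases)
    obtain f where f: "f \<in> Ar" "tgt f = A" "h = L_arr_of X f"
      using h Aa L_arr_to_total_obj [of h A] by (auto simp: hom_def)
    have N: "N = (src f, rst f)"
      using h f by (simp add: hom_def L_arr_of_def)
    have a: "(tgt f, a) \<in> L_objs X"
      using M Aa f by simp
    let ?m = "((src f, rst (f \<cdot> a)), rst (f \<cdot> a), (src f, rst f))"
    let ?g = "((src f, rst (f \<cdot> a)), f \<cdot> a, (tgt f, a))"
    show ?thesis
    proof (intro exI conjI)
      show "is_pullback (L X) ?m ?g h (cEta (L X) M)"
        using is_pullback_L_eta [OF f(1) a] f Aa by simp
      show "cL (L X) (cDom (L X) ?m) = cL (L X) N"
        using N by simp
      show "cComp (L X) ?m (cEta (L X) N) = cEta (L X) (cDom (L X) ?m)"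
        using L_pullback_leg_eta [OF f(1) a] N by simp
    qed
  qed
  show ?thesis
    unfolding local_category_def using is_cat_L eta pullback by blast
qed

lemma L_eta_pullback_unique:
  assumes f: "f \<in> Ar" and a: "(tgt f, a) \<in> L_objs X"
    and pb: "is_pullback (L X) m g (L_arr_of X f) (cEta (L X) (tgt f, a))"
    and m_eta: "cComp (L X) m (cEta (L X) (src f, rst f)) = cEta (L X) (cDom (L X) m)"
  defines "q \<equiv> rst (f \<cdot> a)"
  shows "m = ((src f, q), q, (src f, rst f)) \<and> g = ((src f, q), f \<cdot> a, (tgt f, a))"
proof -
  have a': "a \<in> Ar" "src a = tgt f" "rst a = a"
    using a by simp_all
  have fa: "f \<cdot> a \<in> Ar" "src (f \<cdot> a) = src f"
    using f a' by simp_all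
  have m_arr: "m \<in> cArr (L X)" and g_arr: "g \<in> cArr (L X)"
    and dom_mg: "cDom (L X) m = cDom (L X) g"
    and cod_m: "cCod (L X) m = cDom (L X) (L_arr_of X f)"
    and cod_g: "cCod (L X) g = cDom (L X) (cEta (L X) (tgt f, a))"
    and square: "cComp (L X) m (L_arr_of X f) = cComp (L X) g (cEta (L X) (tgt f, a))"
    using pb unfolding is_pullback_def by blast+
  obtain p where m: "m = ((src f, p), p, (src f, rst f))"
    and p: "p \<in> Ar" "src p = src f" "tgt p = src f" "rst p = p"
    using m_arr cod_m m_eta
    by (cases m rule: L_arr_cases) (auto simp: L_arr_of_def)
  obtain g' where g: "g = ((src f, p), g', (tgt f, a))" and g': "g' \<in> Ar" "rst g' = p" "g' \<cdot> a = g'"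
    using g_arr dom_mg cod_g m by (cases g rule: L_arr_cases) auto
  have pf: "p \<cdot> f = g'"
    using square m g g' by (simp add: L_arr_of_def)
  let ?m0 = "((src f, q), q, (src f, rst f))" and ?g0 = "((src f, q), f \<cdot> a, (tgt f, a))"
  have m0: "?m0 \<in> cArr (L X)" and g0: "?g0 \<in> cArr (L X)"
    and square0: "cComp (L X) ?m0 (L_arr_of X f) = cComp (L X) ?g0 (cEta (L X) (tgt f, a))"
    using is_pullback_L_eta [OF f a] unfolding is_pullback_def q_def by blast+
  obtain u where "u \<in> hom (L X) (cDom (L X) ?m0) (cDom (L X) m)" "cComp (L X) u m = ?m0"
      "cComp (L X) u g = ?g0"
    by (rule is_pullback_universal [OF pb m0 g0 _ _ _ square0]) (simp_all add: L_arr_of_def)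
  then have qp: "q \<cdot> p = q"
    using m by (cases u rule: L_arr_cases) (auto simp: hom_def)
  have "p = rst (p \<cdot> (f \<cdot> a))"
    using pf g' f a' p seq_assoc [of p f a] by simp
  also have "\<dots> = p \<cdot> q"
    using rst_seq_rst [of "f \<cdot> a" p] fa p by (simp add: q_def)
  also have "\<dots> = q \<cdot> p"
    using restriction_idempotents_commute [of p q] p fa by (simp add: q_def)
  finally have "p = q"
    using qp by simp
  moreover have "q \<cdot> f = f \<cdot> a"
    using seq_rst [of f a] f a' by (simp add: q_def)
  ultimately show ?thesis
    using m g pf by simp
qed

end

section \<open>R[L[X]] is a copy of X\<close>

definition span_of ::
    "('o,'a,'m) rcat_scheme \<Rightarrow> 'a \<Rightarrow> ('o \<times> 'a) \<times> ('o \<times> 'a) \<times> 'a \<times> ('o \<times> 'a)" where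
  "span_of X f = ((cDom X f, cRst X f), L_arr_of X f)"

definition phi_inv_obj :: "('o,'a,'m) rcat_scheme \<Rightarrow> 'o \<Rightarrow> 'o \<times> 'a" where
  "phi_inv_obj X A = (A, cId X A)"

definition phi_inv_arr ::
    "('o,'a,'m) rcat_scheme \<Rightarrow> 'a \<Rightarrow> (('o \<times> 'a) \<times> ('o \<times> 'a) \<times> 'a \<times> ('o \<times> 'a)) set" where
  "phi_inv_arr X f = {span_of X f}"

lemma R_simps:
  "cObj (R C) = {M. total_obj C M}"
  "cArr (R C) = {rclass C (U, f) | U f. U \<in> cObj C \<and> f \<in> cArr C \<and> cDom C f = U \<and>
     total_obj C (cCod C f)}"
  "cDom (R C) c = cL C (fst (rrep c))"
  "cCod (R C) c = cCod C (snd (rrep c))"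
  "cId (R C) M = rclass C (M, cId C M)"
  "cComp (R C) = rcomp C"
  "cRst (R C) c = rclass C (fst (rrep c), cEta C (fst (rrep c)))"
  by (simp_all add: R_def)

lemma rrep_phi_inv_arr [simp]: "rrep (phi_inv_arr X f) = span_of X f"
  by (simp add: rrep_def phi_inv_arr_def)

lemma phi_arr_phi_inv_arr [simp]: "phi_arr (phi_inv_arr X f) = f"
  by (simp add: phi_arr_def span_of_def L_arr_of_def)

lemma phi_obj_phi_inv_obj [simp]: "phi_obj (phi_inv_obj X A) = A"
  by (simp add: phi_obj_def phi_inv_obj_def)

context restriction_cat
begin

lemma L_iso_over_eta_is_id:
  assumes iso: "is_iso (L X) \<phi>" and cod: "cCod (L X) \<phi> = (A, a)"
    and eta: "cComp (L X) \<phi> (cEta (L X) (A, a)) = cEta (L X) (cDom (L X) \<phi>)"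
  shows "\<phi> = cId (L X) (A, a)"
proof -
  obtain \<psi> where \<psi>: "\<psi> \<in> hom (L X) (cCod (L X) \<phi>) (cDom (L X) \<phi>)"
    "cComp (L X) \<phi> \<psi> = cId (L X) (cDom (L X) \<phi>)"
    "cComp (L X) \<psi> \<phi> = cId (L X) (cCod (L X) \<phi>)"
    using iso unfolding is_iso_def by blast
  obtain a' where \<phi>: "\<phi> = ((A, a'), a', (A, a))"
    and a': "a' \<in> Ar" "src a' = A" "rst a' = a'" "a' \<cdot> a = a'"
  proof -
    have "\<phi> \<in> cArr (L X)"
      using iso by (simp add: is_iso_def)
    with cod eta show ?thesis
      by (cases \<phi> rule: L_arr_cases) (auto intro: that)
  qed
  obtain q where \<psi>': "\<psi> = ((A, a), q, (A, a'))"
    using \<psi>(1) \<phi> by (cases \<psi> rule: L_arr_cases) (simp add: hom_def)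
  have q: "q \<in> Ar" "src q = A" "rst q = a" "q \<cdot> a' = q"
    using \<psi>(1) \<psi>' \<phi> by (simp_all add: hom_def)
  have "q \<cdot> a' = a"
    using \<psi>(3) \<psi>' \<phi> by simp
  then have "a \<cdot> a' = a"
    using q by simp
  moreover have "a' \<cdot> a = a'"
    using a' by simp
  moreover have "a \<cdot> a' = a' \<cdot> a"
    using restriction_idempotents_commute [of a a'] q a' by auto
  ultimately show ?thesis
    using \<phi> by simp
qed

lemma rclass_L_singleton:
  assumes h: "h \<in> cArr (L X)"
  shows "rclass (L X) (cDom (L X) h, h) = {(cDom (L X) h, h)}"
proof (intro equalityI subsetI)
  fix p
  assume "p \<in> rclass (L X) (cDom (L X) h, h)"
  then obtain \<phi> where \<phi>: "is_iso (L X) \<phi>" "cDom (L X) \<phi> = fst p" "cCod (L X) \<phi> = cDom (L X) h"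
      "cComp (L X) \<phi> (cEta (L X) (cDom (L X) h)) = cEta (L X) (fst p)" "cComp (L X) \<phi> h = snd p"
    unfolding rclass_def span_iso_def by auto
  obtain A a where Aa: "cDom (L X) h = (A, a)"
    by (rule L_obj_cases)
  have id: "\<phi> = cId (L X) (A, a)"
    using L_iso_over_eta_is_id \<phi> Aa by simp
  obtain h' B b where h': "h = ((A, a), h', (B, b))" "h' \<in> Ar" "rst h' = a"
    using h Aa by (cases h rule: L_arr_cases) auto
  have "fst p = (A, a)"
    using \<phi>(2) id by simp
  moreover have "snd p = h"
    using \<phi>(5) id h' rst_seq [of h'] by simp
  ultimately show "p \<in> {(cDom (L X) h, h)}"
    using Aa by (simp add: prod_eq_iff)
next
  fix p
  assume "p \<in> {(cDom (L X) h, h)}"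
  then have p: "p = (cDom (L X) h, h)"
    by simp
  obtain A a h' B b where h': "h = ((A, a), h', (B, b))"
    by (rule L_arr_cases)
  have a: "a \<in> Ar" "rst a = a" "a \<cdot> a = a" "a \<cdot> h' = h'"
    using h h' rst_seq [of h'] by (auto simp: restriction_idempotent_idem)
  have id_arr: "((A, a), a, (A, a)) \<in> cArr (L X)"
    using h h' a by simp
  have "is_iso (L X) ((A, a), a, (A, a))"
    unfolding is_iso_def hom_def using id_arr a by auto
  then have "span_iso (L X) p (cDom (L X) h, h)"
    unfolding span_iso_def p h' using a by (intro exI [of _ "((A, a), a, (A, a))"]) simp
  then show "p \<in> rclass (L X) (cDom (L X) h, h)"
    using h h' p by (auto simp: rclass_def hom_def)
qed

lemma rclass_span_of: "f \<in> Ar \<Longrightarrow> rclass (L X) (span_of X f) = phi_inv_arr X f"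
  using rclass_L_singleton [of "L_arr_of X f"]
  by (simp add: span_of_def phi_inv_arr_def L_arr_of_def)

lemma R_L_objs: "cObj (R (L X)) = phi_inv_obj X ` Ob"
  by (auto simp: R_simps total_obj_def phi_inv_obj_def)

lemma R_L_dom: "cDom (R (L X)) (phi_inv_arr X f) = phi_inv_obj X (src f)"
  and R_L_cod: "cCod (R (L X)) (phi_inv_arr X f) = phi_inv_obj X (tgt f)"
  by (simp_all add: R_simps span_of_def L_arr_of_def phi_inv_obj_def)

lemma R_L_id: "A \<in> Ob \<Longrightarrow> cId (R (L X)) (phi_inv_obj X A) = phi_inv_arr X (idt A)"
  using rclass_span_of [of "idt A"] by (simp add: R_simps phi_inv_obj_def span_of_def L_arr_of_def)

lemma R_L_rst: "f \<in> Ar \<Longrightarrow> cRst (R (L X)) (phi_inv_arr X f) = phi_inv_arr X (rst f)"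
  using rclass_span_of [of "rst f"] by (simp add: R_simps span_of_def L_arr_of_def)

lemma R_L_arrs: "cArr (R (L X)) = phi_inv_arr X ` Ar"
proof (intro equalityI subsetI)
  fix c
  assume "c \<in> cArr (R (L X))"
  then obtain h where h: "h \<in> cArr (L X)" "total_obj (L X) (cCod (L X) h)"
    and c: "c = rclass (L X) (cDom (L X) h, h)"
    unfolding R_simps by blast
  then obtain f where "f \<in> Ar" "h = L_arr_of X f"
    by (cases h rule: L_arr_cases) (auto simp: total_obj_def L_arr_of_def)
  with c show "c \<in> phi_inv_arr X ` Ar"
    using rclass_span_of [of f] by (simp add: span_of_def L_arr_of_def)
next
  fix c
  assume "c \<in> phi_inv_arr X ` Ar"
  then obtain f where f: "f \<in> Ar" "c = rclass (L X) ((src f, rst f), L_arr_of X f)"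
    using rclass_span_of by (auto simp: span_of_def)
  moreover have "total_obj (L X) (cCod (L X) (L_arr_of X f))"
    using f by (simp add: total_obj_def L_arr_of_def)
  moreover have "L_arr_of X f \<in> cArr (L X)"
    using f by simp
  ultimately show "c \<in> cArr (R (L X))"
    unfolding R_simps mem_Collect_eq
    by (intro exI [of _ "(src f, rst f)"] exI [of _ "L_arr_of X f"]) (simp add: L_arr_of_def)
qed

lemma R_L_comp:
  assumes f: "f \<in> Ar" and g: "g \<in> Ar" and fg: "tgt f = src g"
  shows "cComp (R (L X)) (phi_inv_arr X f) (phi_inv_arr X g) = phi_inv_arr X (f \<cdot> g)"
proof -
  define q where "q = rst (f \<cdot> rst g)"
  define rcomp_pullback where "rcomp_pullback mg \<longleftrightarrow>
      is_pullback (L X) (fst mg) (snd mg) (L_arr_of X f) (cEta (L X) (tgt f, rst g)) \<and>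
      cL (L X) (cDom (L X) (fst mg)) = cL (L X) (src f, rst f) \<and>
      cComp (L X) (fst mg) (cEta (L X) (src f, rst f)) = cEta (L X) (cDom (L X) (fst mg))"
    for mg
  let ?mg = "(((src f, q), q, (src f, rst f)), ((src f, q), f \<cdot> rst g, (tgt f, rst g)))"
  have rg: "(tgt f, rst g) \<in> L_objs X"
    using g fg by simp
  have "(SOME mg. rcomp_pullback mg) = ?mg"
  proof (rule some_equality)
    show "rcomp_pullback ?mg"
      using is_pullback_L_eta [OF f rg] L_pullback_leg_eta [OF f rg]
      by (simp add: rcomp_pullback_def q_def)
  next
    fix mg
    assume "rcomp_pullback mg"
    then show "mg = ?mg"
      using L_eta_pullback_unique [OF f rg, of "fst mg" "snd mg"]
      by (simp add: rcomp_pullback_def q_def prod_eq_iff)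
  qed
  then have "cComp (R (L X)) (phi_inv_arr X f) (phi_inv_arr X g) =
      rclass (L X) ((src f, q), cComp (L X) ((src f, q), f \<cdot> rst g, (tgt f, rst g)) (L_arr_of X g))"
    using fg unfolding R_simps rcomp_def rcomp_pullback_def
    by (simp add: Let_def span_of_def L_arr_of_def)
  also have "\<dots> = rclass (L X) (span_of X (f \<cdot> g))"
    using f g fg seq_assoc [of f "rst g" g] rst_seq_rst_right [of f g]
    by (simp add: q_def span_of_def L_arr_of_def)
  also have "\<dots> = phi_inv_arr X (f \<cdot> g)"
    using f g fg by (simp add: rclass_span_of)
  finally show ?thesis .
qed

lemma rcat_copy_R_L: "rcat_copy X (R (L X)) (phi_inv_obj X) (phi_inv_arr X) phi_obj phi_arr"
  unfolding rcat_copy_def rcat_copy_axioms_def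
  using restriction_cat_axioms
  by (simp add: R_L_objs R_L_arrs R_L_dom R_L_cod R_L_id R_L_rst R_L_comp)

end

section \<open>Naturality\<close>

lemma phi_obj_L_obj: "phi_obj (L_obj Fo Fa M) = Fo (phi_obj M)"
  by (simp add: phi_obj_def L_obj_def split: prod.split)

lemma R_arr_L_phi_inv_arr:
  assumes X: "restriction_category X" and Y: "restriction_category Y"
    and F: "rfunctor X Y Fo Fa" and f: "f \<in> cArr X"
  shows "R_arr (L Y) (L_obj Fo Fa) (L_arr Fo Fa) (phi_inv_arr X f) = phi_inv_arr Y (Fa f)"
proof -
  have "cCod X f \<in> cObj X"
    using restriction_cat.ob_tgt [OF restriction_cat.intro [OF X] f] .
  then have "cDom Y (Fa f) = Fo (cDom X f)" "cCod Y (Fa f) = Fo (cCod X f)"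
    "Fa (cRst X f) = cRst Y (Fa f)" "Fa (cId X (cCod X f)) = cId Y (Fo (cCod X f))"
    using F f unfolding rfunctor_def is_functor_def hom_def by blast+
  then have "R_arr (L Y) (L_obj Fo Fa) (L_arr Fo Fa) (phi_inv_arr X f) = rclass (L Y) (span_of Y (Fa f))"
    by (simp add: R_arr_def span_of_def L_obj_def L_arr_def L_arr_of_def)
  also have "\<dots> = phi_inv_arr Y (Fa f)"
    using restriction_cat.rclass_span_of [OF restriction_cat.intro [OF Y]] F f
    unfolding rfunctor_def is_functor_def hom_def by blast
  finally show ?thesis .
qed

theorem proposition4p17:
  fixes X :: "('o,'a) rcat" and Y :: "('p,'b) rcat"
    and Fo :: "'o \<Rightarrow> 'p" and Fa :: "'a \<Rightarrow> 'b"
  assumes "restriction_category X"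
  shows "local_category (L X) \<and> restriction_category (R (L X)) \<and>
         iso_rcat (R (L X)) X phi_obj phi_arr \<and>
         (restriction_category Y \<and> rfunctor X Y Fo Fa \<longrightarrow>
            (\<forall>M\<in>cObj (R (L X)). phi_obj (L_obj Fo Fa M) = Fo (phi_obj M)) \<and>
            (\<forall>c\<in>cArr (R (L X)).
               phi_arr (R_arr (L Y) (L_obj Fo Fa) (L_arr Fo Fa) c) = Fa (phi_arr c)))"
proof -
  interpret restriction_cat X
    using assms by (rule restriction_cat.intro)
  interpret R_L: rcat_copy X "R (L X)" "phi_inv_obj X" "phi_inv_arr X" phi_obj phi_arr
    by (rule rcat_copy_R_L)
  have "\<forall>c\<in>cArr (R (L X)). phi_arr (R_arr (L Y) (L_obj Fo Fa) (L_arr Fo Fa) c) = Fa (phi_arr c)"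
    if "restriction_category Y" "rfunctor X Y Fo Fa"
    using R_arr_L_phi_inv_arr [OF assms that] by (simp add: R_L_arrs)
  then show ?thesis
    using local_category_L R_L.restriction_category_copy R_L.iso_rcat_copy phi_obj_L_obj by blast
qed

end
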